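(* Let $\mathcal{A}$ be a family of nonempty subsets of $\mathbb{R}^n$ closed under linear combinations, and let $\mathcal{F}:\mathcal{A}\to\mathbb{R}_{\geqslant0}$ be increasing under set inclusion and sub-homogeneous of degree $1/\alpha$ for some $\alpha>0$. Let $K,L\in\mathcal{A}$ with $\mathcal{F}(K)\mathcal{F}(L)>0$ satisfy, for all $\lambda\in(0,1)$, \[ \mathcal{F}\bigl((1-\lambda)K+\lambda L\bigr)\geqslant C\bigl((1-\lambda)\mathcal{F}(K)^\alpha+\lambda\mathcal{F}(L)^\alpha\bigr)^{1/\alpha}\qquad(\ast) \] for some constant $C>0$. Then for any $p\geqslant1$ and all $\lambda\in(0,1)$, \[ \mathcal{F}\bigl((1-\lambda)\cdot K+_p\lambda\cdot L\bigr)\geqslant C\bigl((1-\lambda)\mathcal{F}(K)^{p\alpha}+\lambda\mathcal{F}(L)^{p\alpha}\bigr)^{1/(p\alpha)} \] whenever $(1-\lambda)\cdot K+_p\lambda\cdot L\in\mathcal{A}$. Moreover, if equality holds for some $\lambda\in(0,1)$ and $p>1$, then $K,L$ satisfy $(\ast)$ with equality for some $\bar\lambda\in(0,1)$; if in addition $\mathcal{F}$ is strictly increasing and $K,L$ are compact, then $\mathrm{conv}\,K$ and $\mathrm{conv}\,L$ contain the origin and are dilatates of each other; and if furthermore $\mathcal{F}$ is strictly sub-homogeneous of degree $1/\alpha$, then $\mathrm{conv}\,K=\mathrm{conv}\,L$.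
   Context: A functional $\mathcal{F}:\mathcal{A}\to\mathbb{R}_{\geqslant0}$ on a family closed under dilatations is sub-homogeneous of degree $1/\alpha$ ($\alpha\neq0$) if $\mathcal{F}(rK)\leqslant r^{1/\alpha}\mathcal{F}(K)$ for all $r\geqslant1$, and strictly sub-homogeneous if the inequality is strict whenever $\mathcal{F}(K)>0$ and $r>1$. Strictly increasing means $A\subsetneq B$ implies $\mathcal{F}(A)<\mathcal{F}(B)$. A dilatate of $A$ is a set $\lambda A$ with $\lambda\geqslant0$; $\mathrm{conv}$ denotes convex hull. For $p>1$, $q$ is the Hölder conjugate ($1/p+1/q=1$); for nonempty $K,L$, $K+_pL=\{(1-\mu)^{1/q}x+\mu^{1/q}y: x\in K, y\in L, \mu\in[0,1]\}$ and $\lambda\cdot K=\lambda^{1/p}K$; for $p=1$ the coefficients $(1-\mu)^{1/q},\mu^{1/q}$ are interpreted as $1$, so $+_1$ is Minkowski addition. *)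

theory Defs
  imports "HOL-Analysis.Analysis"
begin

definition dil :: "real \<Rightarrow> 'a::real_vector set \<Rightarrow> 'a set" where
  "dil r A = (\<lambda>x. r *\<^sub>R x) ` A"

definition lincomb :: "real \<Rightarrow> 'a::real_vector set \<Rightarrow> real \<Rightarrow> 'a set \<Rightarrow> 'a set" where
  "lincomb a A b B = {a *\<^sub>R x + b *\<^sub>R y | x y. x \<in> A \<and> y \<in> B}"

definition hconj :: "real \<Rightarrow> real" where
  "hconj p = p / (p - 1)"

definition psum :: "real \<Rightarrow> 'a::real_vector set \<Rightarrow> 'a set \<Rightarrow> 'a set" where
  "psum p K L = (if p = 1 then {x + y | x y. x \<in> K \<and> y \<in> L}
     else {(1 - \<mu>) powr (1 / hconj p) *\<^sub>R x + \<mu> powr (1 / hconj p) *\<^sub>R y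
            | x y \<mu>. x \<in> K \<and> y \<in> L \<and> 0 \<le> \<mu> \<and> \<mu> \<le> 1})"

definition pscale :: "real \<Rightarrow> real \<Rightarrow> 'a::real_vector set \<Rightarrow> 'a set" where
  "pscale p l K = dil (l powr (1 / p)) K"

definition closed_lincomb :: "'a::real_vector set set \<Rightarrow> bool" where
  "closed_lincomb \<A> \<longleftrightarrow> (\<forall>A\<in>\<A>. \<forall>B\<in>\<A>. \<forall>a b. a \<ge> 0 \<and> b \<ge> 0 \<longrightarrow> lincomb a A b B \<in> \<A>)"

definition increasing_on :: "'a set set \<Rightarrow> ('a set \<Rightarrow> real) \<Rightarrow> bool" where
  "increasing_on \<A> F \<longleftrightarrow> (\<forall>A\<in>\<A>. \<forall>B\<in>\<A>. A \<subseteq> B \<longrightarrow> F A \<le> F B)"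

definition strictly_increasing_on :: "'a set set \<Rightarrow> ('a set \<Rightarrow> real) \<Rightarrow> bool" where
  "strictly_increasing_on \<A> F \<longleftrightarrow> (\<forall>A\<in>\<A>. \<forall>B\<in>\<A>. A \<subset> B \<longrightarrow> F A < F B)"

definition subhom :: "'a::real_vector set set \<Rightarrow> ('a set \<Rightarrow> real) \<Rightarrow> real \<Rightarrow> bool" where
  "subhom \<A> F \<alpha> \<longleftrightarrow> (\<forall>K\<in>\<A>. \<forall>r. r \<ge> 1 \<longrightarrow> F (dil r K) \<le> r powr (1 / \<alpha>) * F K)"

definition strict_subhom :: "'a::real_vector set set \<Rightarrow> ('a set \<Rightarrow> real) \<Rightarrow> real \<Rightarrow> bool" where
  "strict_subhom \<A> F \<alpha> \<longleftrightarrow> subhom \<A> F \<alpha> \<and>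
     (\<forall>K\<in>\<A>. \<forall>r. r > 1 \<and> F K > 0 \<longrightarrow> F (dil r K) < r powr (1 / \<alpha>) * F K)"

end

theory Submission
  imports Defs
begin

text \<open>
  For p > 1 the set (1 - t) . K +_p t . L is the union over mu in [0,1] of the Minkowski
  combinations c1 K + c2 L with c1 = (1 - mu)^(1/q) (1 - t)^(1/p) and c2 = mu^(1/q) t^(1/p),
  and c1 + c2 <= 1 by Young's inequality. Such a combination is the dilatate by s = c1 + c2 of
  a convex combination of K and L, so sub-homogeneity and the hypothesis bound F(c1 K + c2 L)
  below by C (c1 F(K)^alpha + c2 F(L)^alpha)^(1/alpha). Choosing mu as in the equality case of
  Hoelder's inequality turns this bound into the (p alpha)-mean of F(K) and F(L), and
  monotonicity transfers it to the L_p sum.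

  In the equality case every step of this chain is tight. Strict monotonicity forces the L_p
  sum to coincide with the optimal combination, so for every direction theta the function
  mu |-> (1 - mu)^(1/q) a h_K(theta) + mu^(1/q) b h_L(theta) of the support values attains its
  maximum over [0,1] at the interior point mu0. Its vanishing derivative gives
  h_L = kappa h_K with a constant kappa > 0, and comparison with mu = 0 gives h_K >= 0;
  by separation, conv L = kappa conv K and both hulls contain 0. Strict sub-homogeneity
  forces s = 1, and the same critical-point argument for mu |-> c1 + c2 gives kappa = 1.
\<close>

section \<open>Two-term Young and Hoelder inequalities\<close>

lemma powr_mult_le_convex_combination:
  fixes x y e :: real
  assumes "0 \<le> x" "0 \<le> y" "0 \<le> e" "e \<le> 1"
  shows "x powr e * y powr (1 - e) \<le> e * x + (1 - e) * y"
proof (cases "x = 0 \<or> y = 0")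
  case True
  then show ?thesis using assms by auto
next
  case False
  then show ?thesis using assms Youngs_inequality_0[of e "1 - e" x y] by simp
qed

lemma powr_combination_le_1:
  fixes m t e :: real
  assumes "0 \<le> m" "m \<le> 1" "0 \<le> t" "t \<le> 1" "0 \<le> e" "e \<le> 1"
  shows "(1 - m) powr e * (1 - t) powr (1 - e) + m powr e * t powr (1 - e) \<le> 1"
proof -
  have "(1 - m) powr e * (1 - t) powr (1 - e) \<le> e * (1 - m) + (1 - e) * (1 - t)"
    "m powr e * t powr (1 - e) \<le> e * m + (1 - e) * t"
    using assms by (auto intro!: powr_mult_le_convex_combination)
  then show ?thesis by (simp add: algebra_simps)
qed

lemma powr_combination_interior_max:
  fixes e m0 A B :: real
  assumes e: "0 < e" "e < 1" and m0: "0 < m0" "m0 < 1"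
    and max: "\<And>m. 0 \<le> m \<Longrightarrow> m \<le> 1 \<Longrightarrow>
      (1 - m) powr e * A + m powr e * B \<le> (1 - m0) powr e * A + m0 powr e * B"
  shows "(1 - m0) powr (e - 1) * A = m0 powr (e - 1) * B" and "0 \<le> A"
proof -
  let ?G = "\<lambda>m. (1 - m) powr e * A + m powr e * B"
  have "(?G has_real_derivative e * (m0 powr (e - 1) * B - (1 - m0) powr (e - 1) * A)) (at m0)"
    using m0 by (auto intro!: derivative_eq_intros simp: algebra_simps)
  then have "e * (m0 powr (e - 1) * B - (1 - m0) powr (e - 1) * A) = 0"
    by (rule DERIV_local_max[of _ _ _ "min m0 (1 - m0)"]) (use m0 max in \<open>auto simp: abs_if\<close>)
  then show crit: "(1 - m0) powr (e - 1) * A = m0 powr (e - 1) * B"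
    using e by simp
  have "(1 - m0) * (1 - m0) powr (e - 1) = (1 - m0) powr e" "m0 * m0 powr (e - 1) = m0 powr e"
    using m0 by (simp_all add: powr_mult_base)
  then have "A \<le> (1 - m0) * ((1 - m0) powr (e - 1) * A) + m0 * (m0 powr (e - 1) * B)"
    using max[of 0] by (simp add: mult.assoc[symmetric])
  also have "\<dots> = (1 - m0) powr (e - 1) * A"
    using crit by (simp add: algebra_simps)
  finally have "A \<le> (1 - m0) powr (e - 1) * A" .
  moreover have "1 < (1 - m0) powr (e - 1)"
    using m0 e powr_less_mono2_neg[of "e - 1" "1 - m0" 1] by simp
  ultimately show "0 \<le> A"
    by (auto simp: mult_le_cancel_right1 not_le)
qed

lemma hoelder_equality_weights:
  fixes p u v :: real
  assumes p: "1 < p" and uv: "0 < u" "0 < v"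
  defines "m0 \<equiv> v powr p / (u powr p + v powr p)"
  shows "0 < m0" "m0 < 1"
    and "(1 - m0) powr (1 - 1/p) * u + m0 powr (1 - 1/p) * v = (u powr p + v powr p) powr (1/p)"
proof -
  define D where "D = u powr p + v powr p"
  have D: "0 < D" using uv by (simp add: D_def add_pos_pos)
  show "0 < m0" "m0 < 1" using uv by (simp_all add: m0_def field_simps add_pos_pos)
  have m0': "1 - m0 = u powr p / D" using D by (simp add: m0_def D_def field_simps)
  have weight: "(w powr p / D) powr (1 - 1/p) * w = w powr p / D powr (1 - 1/p)" if "0 < w" for w
  proof -
    have "(w powr p / D) powr (1 - 1/p) * w = w powr (p * (1 - 1/p) + 1) / D powr (1 - 1/p)"
      using that D by (simp add: powr_divide powr_powr powr_add)
    also have "p * (1 - 1/p) + 1 = p" using p by (simp add: field_simps)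
    finally show ?thesis .
  qed
  have "(1 - m0) powr (1 - 1/p) * u = u powr p / D powr (1 - 1/p)"
    using weight[OF uv(1)] by (simp add: m0')
  moreover have "m0 powr (1 - 1/p) * v = v powr p / D powr (1 - 1/p)"
    using weight[OF uv(2)] by (simp add: m0_def D_def)
  ultimately have "(1 - m0) powr (1 - 1/p) * u + m0 powr (1 - 1/p) * v = D / D powr (1 - 1/p)"
    by (simp add: D_def add_divide_distrib)
  also have "\<dots> = D powr (1/p)" using D by (simp add: powr_diff)
  finally show "(1 - m0) powr (1 - 1/p) * u + m0 powr (1 - 1/p) * v = (u powr p + v powr p) powr (1/p)"
    by (simp add: D_def)
qed

section \<open>L_p sums, dilatates and sub-homogeneity\<close>

definition power_mean :: "real \<Rightarrow> real \<Rightarrow> real \<Rightarrow> real \<Rightarrow> real" where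
  "power_mean q t x y = ((1 - t) * x powr q + t * y powr q) powr (1 / q)"

definition psum_weight :: "real \<Rightarrow> real \<Rightarrow> real \<Rightarrow> real" where
  "psum_weight p t \<mu> = \<mu> powr (1 / hconj p) * t powr (1 / p)"

lemma inverse_hconj: "1 < p \<Longrightarrow> 1 / hconj p = 1 - 1 / p"
  by (simp add: hconj_def field_simps)

lemma psum_weights_le_1:
  assumes "1 < p" "0 \<le> \<mu>" "\<mu> \<le> 1" "0 \<le> t" "t \<le> 1"
  shows "psum_weight p (1 - t) (1 - \<mu>) + psum_weight p t \<mu> \<le> 1"
  using powr_combination_le_1[of \<mu> t "1 - 1/p"] assms
  by (simp add: psum_weight_def inverse_hconj)

lemma psum_weights_bounds:
  assumes "1 < p" "0 < t" "t < 1" "0 < \<mu>" "\<mu> < 1"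
  shows "0 < psum_weight p (1 - t) (1 - \<mu>)" "0 < psum_weight p t \<mu>"
    and "psum_weight p (1 - t) (1 - \<mu>) + psum_weight p t \<mu> \<le> 1"
  using assms psum_weights_le_1[of p \<mu> t] by (simp_all add: psum_weight_def)

lemma psum_weights_hoelder_equality:
  assumes "1 < p" "0 < t" "t < 1" "0 < x" "0 < y"
  obtains m0 where "0 < m0" "m0 < 1"
    "psum_weight p (1 - t) (1 - m0) * x + psum_weight p t m0 * y
       = ((1 - t) * x powr p + t * y powr p) powr (1 / p)"
proof -
  define u where "u = (1 - t) powr (1 / p) * x"
  define v where "v = t powr (1 / p) * y"
  have uv: "0 < u" "0 < v" using assms by (simp_all add: u_def v_def)
  have "u powr p = (1 - t) * x powr p" "v powr p = t * y powr p"
    using assms by (simp_all add: u_def v_def powr_mult powr_powr)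
  moreover obtain m0 where "0 < m0" "m0 < 1"
    "(1 - m0) powr (1 - 1/p) * u + m0 powr (1 - 1/p) * v = (u powr p + v powr p) powr (1/p)"
    using hoelder_equality_weights[OF \<open>1 < p\<close> uv] by blast
  moreover have "psum_weight p (1 - t) (1 - m0) * x = (1 - m0) powr (1 - 1/p) * u"
    "psum_weight p t m0 * y = m0 powr (1 - 1/p) * v"
    using assms by (simp_all add: psum_weight_def inverse_hconj u_def v_def)
  ultimately show ?thesis using that by simp
qed

lemma dil_lincomb: "dil r (lincomb a A b B) = lincomb (r * a) A (r * b) B"
  unfolding dil_def lincomb_def by (auto simp: scaleR_add_right image_iff; force simp: scaleR_add_right)

lemma psum_pscale_1:
  assumes "0 \<le> t" "t \<le> 1"
  shows "psum 1 (pscale 1 (1 - t) K) (pscale 1 t L) = lincomb (1 - t) K t L"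
  using assms unfolding psum_def pscale_def dil_def lincomb_def by auto

lemma psum_pscale_eq_Union_lincomb:
  assumes "p \<noteq> 1"
  shows "psum p (pscale p (1 - t) K) (pscale p t L) =
    (\<Union>\<mu>\<in>{0..1}. lincomb (psum_weight p (1 - t) (1 - \<mu>)) K (psum_weight p t \<mu>) L)"
    (is "_ = ?U")
proof (intro set_eqI iffI)
  fix z assume "z \<in> psum p (pscale p (1 - t) K) (pscale p t L)"
  then obtain x y \<mu> where "x \<in> K" "y \<in> L" "0 \<le> \<mu>" "\<mu> \<le> 1"
    "z = (1 - \<mu>) powr (1 / hconj p) *\<^sub>R ((1 - t) powr (1/p) *\<^sub>R x) + \<mu> powr (1 / hconj p) *\<^sub>R (t powr (1/p) *\<^sub>R y)"
    using assms unfolding psum_def pscale_def dil_def by auto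
  then have "z \<in> lincomb (psum_weight p (1 - t) (1 - \<mu>)) K (psum_weight p t \<mu>) L"
    unfolding lincomb_def psum_weight_def by auto
  then show "z \<in> ?U" using \<open>0 \<le> \<mu>\<close> \<open>\<mu> \<le> 1\<close> by auto
next
  fix z assume "z \<in> ?U"
  then obtain x y \<mu> where "x \<in> K" "y \<in> L" "0 \<le> \<mu>" "\<mu> \<le> 1"
    "z = (1 - \<mu>) powr (1 / hconj p) *\<^sub>R ((1 - t) powr (1/p) *\<^sub>R x) + \<mu> powr (1 / hconj p) *\<^sub>R (t powr (1/p) *\<^sub>R y)"
    unfolding lincomb_def psum_weight_def by auto
  then show "z \<in> psum p (pscale p (1 - t) K) (pscale p t L)"
    unfolding psum_def if_not_P[OF assms] pscale_def dil_def by blast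
qed

lemma subhom_dil_le:
  assumes "subhom \<A> F \<alpha>" "dil s M \<in> \<A>" "0 < s" "s \<le> 1"
  shows "s powr (1/\<alpha>) * F M \<le> F (dil s M)"
proof -
  have "dil (1/s) (dil s M) = M" using assms(3) by (simp add: dil_def image_comp)
  then have "F M \<le> (1/s) powr (1/\<alpha>) * F (dil s M)"
    using assms unfolding subhom_def by (metis le_divide_eq_1_pos)
  then show ?thesis
    using assms(3) by (simp add: powr_divide divide_simps mult.commute split: if_splits)
qed

lemma strict_subhom_dil_less:
  assumes "strict_subhom \<A> F \<alpha>" "dil s M \<in> \<A>" "0 < s" "s < 1" "0 < F (dil s M)"
  shows "s powr (1/\<alpha>) * F M < F (dil s M)"
proof -
  have "dil (1/s) (dil s M) = M" using assms(3) by (simp add: dil_def image_comp)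
  then have "F M < (1/s) powr (1/\<alpha>) * F (dil s M)"
    using assms unfolding strict_subhom_def by (metis less_divide_eq_1_pos)
  then show ?thesis
    using assms(3) by (simp add: powr_divide divide_simps mult.commute)
qed

section \<open>Support values and convex hulls\<close>

lemma mem_convex_hull_if_inner_le:
  fixes S :: "'a::euclidean_space set"
  assumes "compact S" and le: "\<And>\<theta>. \<exists>w\<in>S. inner \<theta> z \<le> inner \<theta> w"
  shows "z \<in> convex hull S"
proof (rule ccontr)
  assume "z \<notin> convex hull S"
  moreover have "convex (convex hull S)" "closed (convex hull S)"
    using assms(1) by (simp_all add: compact_convex_hull compact_imp_closed)
  ultimately obtain \<theta> b where "inner \<theta> z < b" "\<forall>x\<in>convex hull S. b < inner \<theta> x"
    using separating_hyperplane_closed_point by blast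
  then have "\<forall>w\<in>S. inner (- \<theta>) w < inner (- \<theta>) z"
    by (force intro: hull_inc)
  with le[of "- \<theta>"] show False by force
qed

lemma convex_hull_eq_dil_if_support_proportional:
  fixes K L :: "'a::euclidean_space set"
  assumes "compact K" "compact L" "0 < \<kappa>"
    and supp: "\<And>\<theta>. \<exists>x\<in>K. \<exists>y\<in>L. (\<forall>z\<in>K. inner \<theta> z \<le> inner \<theta> x) \<and> (\<forall>z\<in>L. inner \<theta> z \<le> inner \<theta> y)
                     \<and> 0 \<le> inner \<theta> x \<and> inner \<theta> y = \<kappa> * inner \<theta> x"
  shows "0 \<in> convex hull K" "0 \<in> convex hull L" "convex hull L = dil \<kappa> (convex hull K)"
proof -
  show "0 \<in> convex hull K"
    using supp by (intro mem_convex_hull_if_inner_le[OF assms(1)]) fastforce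
  show "0 \<in> convex hull L"
    using supp \<open>0 < \<kappa>\<close> by (intro mem_convex_hull_if_inner_le[OF assms(2)]) (metis inner_zero_right mult_nonneg_nonneg less_imp_le)
  have "compact (dil \<kappa> K)" "compact (dil (1/\<kappa>) L)"
    unfolding dil_def using assms by (simp_all add: compact_scaling)
  have "L \<subseteq> convex hull (dil \<kappa> K)"
  proof
    fix z assume "z \<in> L"
    show "z \<in> convex hull (dil \<kappa> K)"
    proof (rule mem_convex_hull_if_inner_le[OF \<open>compact (dil \<kappa> K)\<close>])
      fix \<theta> :: 'a
      obtain x y where "x \<in> K" "y \<in> L" "\<forall>z\<in>L. inner \<theta> z \<le> inner \<theta> y" "inner \<theta> y = \<kappa> * inner \<theta> x"
        using supp by blast
      then show "\<exists>w\<in>dil \<kappa> K. inner \<theta> z \<le> inner \<theta> w"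
        using \<open>z \<in> L\<close> unfolding dil_def by force
    qed
  qed
  moreover have "K \<subseteq> convex hull (dil (1/\<kappa>) L)"
  proof
    fix z assume "z \<in> K"
    show "z \<in> convex hull (dil (1/\<kappa>) L)"
    proof (rule mem_convex_hull_if_inner_le[OF \<open>compact (dil (1/\<kappa>) L)\<close>])
      fix \<theta> :: 'a
      obtain x y where "x \<in> K" "y \<in> L" "\<forall>z\<in>K. inner \<theta> z \<le> inner \<theta> x" "inner \<theta> y = \<kappa> * inner \<theta> x"
        using supp by blast
      then show "\<exists>w\<in>dil (1/\<kappa>) L. inner \<theta> z \<le> inner \<theta> w"
        using \<open>z \<in> K\<close> \<open>0 < \<kappa>\<close> unfolding dil_def by force
    qed
  qed
  ultimately have "convex hull L \<subseteq> dil \<kappa> (convex hull K)" "convex hull K \<subseteq> dil (1/\<kappa>) (convex hull L)"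
    unfolding dil_def convex_hull_scaling[symmetric] by (simp_all add: hull_minimal)
  then show "convex hull L = dil \<kappa> (convex hull K)"
    using \<open>0 < \<kappa>\<close> unfolding dil_def by (force simp: image_comp)
qed

lemma inner_lincomb_le:
  assumes "z \<in> lincomb c1 K c2 L" "0 \<le> c1" "0 \<le> c2"
    and "\<forall>x'\<in>K. inner \<theta> x' \<le> hK" "\<forall>y'\<in>L. inner \<theta> y' \<le> hL"
  shows "inner \<theta> z \<le> c1 * hK + c2 * hL"
proof -
  obtain x' y' where "x' \<in> K" "y' \<in> L" "z = c1 *\<^sub>R x' + c2 *\<^sub>R y'"
    using assms(1) unfolding lincomb_def by blast
  then show ?thesis
    using assms by (simp add: inner_add_right add_mono mult_left_mono)
qed

lemma support_proportional_if_lincomb_family_subset: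
  fixes K L :: "'a::euclidean_space set"
  assumes K: "compact K" "K \<noteq> {}" and L: "compact L" "L \<noteq> {}"
    and e: "0 < e" "e < 1" and m0: "0 < m0" "m0 < 1" and ab: "0 < a" "0 < b"
    and sub: "\<And>\<mu>. 0 \<le> \<mu> \<Longrightarrow> \<mu> \<le> 1 \<Longrightarrow>
      lincomb ((1 - \<mu>) powr e * a) K (\<mu> powr e * b) L \<subseteq> lincomb ((1 - m0) powr e * a) K (m0 powr e * b) L"
  defines "\<kappa> \<equiv> (1 - m0) powr (e - 1) * a / (m0 powr (e - 1) * b)"
  shows "\<exists>x\<in>K. \<exists>y\<in>L. (\<forall>z\<in>K. inner \<theta> z \<le> inner \<theta> x) \<and> (\<forall>z\<in>L. inner \<theta> z \<le> inner \<theta> y)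
           \<and> 0 \<le> inner \<theta> x \<and> inner \<theta> y = \<kappa> * inner \<theta> x"
proof -
  obtain x where x: "x \<in> K" "\<forall>z\<in>K. inner \<theta> z \<le> inner \<theta> x"
    using continuous_attains_sup[OF K continuous_on_inner[OF continuous_on_const continuous_on_id]]
    by auto
  obtain y where y: "y \<in> L" "\<forall>z\<in>L. inner \<theta> z \<le> inner \<theta> y"
    using continuous_attains_sup[OF L continuous_on_inner[OF continuous_on_const continuous_on_id]]
    by auto
  have max: "(1 - \<mu>) powr e * (a * inner \<theta> x) + \<mu> powr e * (b * inner \<theta> y)
      \<le> (1 - m0) powr e * (a * inner \<theta> x) + m0 powr e * (b * inner \<theta> y)"
    if "0 \<le> \<mu>" "\<mu> \<le> 1" for \<mu>
  proof -
    let ?z = "((1 - \<mu>) powr e * a) *\<^sub>R x + (\<mu> powr e * b) *\<^sub>R y"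
    have "?z \<in> lincomb ((1 - m0) powr e * a) K (m0 powr e * b) L"
      using sub[OF that] x y unfolding lincomb_def by blast
    then have "inner \<theta> ?z \<le> (1 - m0) powr e * a * inner \<theta> x + m0 powr e * b * inner \<theta> y"
      using x y ab by (intro inner_lincomb_le) auto
    then show ?thesis by (simp add: inner_add_right algebra_simps)
  qed
  have "(1 - m0) powr (e - 1) * (a * inner \<theta> x) = m0 powr (e - 1) * (b * inner \<theta> y)"
    and "0 \<le> a * inner \<theta> x"
    using powr_combination_interior_max[OF e m0 max] by blast+
  then have "inner \<theta> y = \<kappa> * inner \<theta> x" "0 \<le> inner \<theta> x"
    using m0 ab by (auto simp: \<kappa>_def field_simps zero_le_mult_iff)
  then show ?thesis using x y by blast
qed

section \<open>Functionals satisfying a Brunn-Minkowski inequality\<close>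

locale brunn_minkowski_pair =
  fixes \<A> :: "'a::euclidean_space set set" and F :: "'a set \<Rightarrow> real"
    and \<alpha> C :: real and K L :: "'a set"
  assumes lincomb_closed: "closed_lincomb \<A>"
    and F_mono: "increasing_on \<A> F"
    and alpha_pos: "0 < \<alpha>"
    and subhom: "subhom \<A> F \<alpha>"
    and K_in: "K \<in> \<A>" and L_in: "L \<in> \<A>"
    and FK_pos: "0 < F K" and FL_pos: "0 < F L"
    and C_pos: "0 < C"
    and BM: "\<And>t. 0 < t \<Longrightarrow> t < 1 \<Longrightarrow> C * power_mean \<alpha> t (F K) (F L) \<le> F (lincomb (1 - t) K t L)"
begin

abbreviation BM_bound :: "real \<Rightarrow> real \<Rightarrow> real" where
  "BM_bound c1 c2 \<equiv> C * (c1 * F K powr \<alpha> + c2 * F L powr \<alpha>) powr (1/\<alpha>)"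

lemma lincomb_in: "0 \<le> a \<Longrightarrow> 0 \<le> b \<Longrightarrow> lincomb a K b L \<in> \<A>"
  using lincomb_closed K_in L_in by (simp add: closed_lincomb_def)

lemma lincomb_as_dil_convex_lincomb:
  assumes "0 < c1" "0 < c2"
  defines "s \<equiv> c1 + c2" and "\<tau> \<equiv> c2 / (c1 + c2)"
  shows "0 < \<tau>" "\<tau> < 1"
    and "lincomb c1 K c2 L = dil s (lincomb (1 - \<tau>) K \<tau> L)"
    and "BM_bound c1 c2 = s powr (1/\<alpha>) * (C * power_mean \<alpha> \<tau> (F K) (F L))"
proof -
  have s: "0 < s" using assms by (simp add: s_def)
  have weights: "s * (1 - \<tau>) = c1" "s * \<tau> = c2"
    using s by (simp_all add: s_def \<tau>_def field_simps)
  show "0 < \<tau>" "\<tau> < 1" using assms by (simp_all add: \<tau>_def)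
  show "lincomb c1 K c2 L = dil s (lincomb (1 - \<tau>) K \<tau> L)"
    by (simp add: dil_lincomb weights)
  have "BM_bound c1 c2
      = C * (s * ((1 - \<tau>) * F K powr \<alpha> + \<tau> * F L powr \<alpha>)) powr (1/\<alpha>)"
    by (simp add: distrib_left mult.assoc[symmetric] weights)
  also have "\<dots> = s powr (1/\<alpha>) * (C * power_mean \<alpha> \<tau> (F K) (F L))"
    using s \<open>\<tau> < 1\<close> \<open>0 < \<tau>\<close> by (simp add: power_mean_def powr_mult)
  finally show "BM_bound c1 c2 = s powr (1/\<alpha>) * (C * power_mean \<alpha> \<tau> (F K) (F L))" .
qed

lemma lincomb_lower_bound:
  assumes "0 < c1" "0 < c2" "c1 + c2 \<le> 1"
  shows "BM_bound c1 c2 \<le> F (lincomb c1 K c2 L)"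
proof -
  note conv = lincomb_as_dil_convex_lincomb[OF assms(1,2)]
  let ?\<tau> = "c2 / (c1 + c2)"
  have "BM_bound c1 c2
      = (c1 + c2) powr (1/\<alpha>) * (C * power_mean \<alpha> ?\<tau> (F K) (F L))"
    by (rule conv(4))
  also have "\<dots> \<le> (c1 + c2) powr (1/\<alpha>) * F (lincomb (1 - ?\<tau>) K ?\<tau> L)"
    using BM[OF conv(1,2)] by (simp add: mult_left_mono)
  also have "\<dots> \<le> F (lincomb c1 K c2 L)"
    using subhom_dil_le[OF subhom, of "c1 + c2"] lincomb_in[of c1 c2] assms(1-3)
    unfolding conv(3) by simp
  finally show ?thesis .
qed

lemma lincomb_lower_bound_equality:
  assumes "0 < c1" "0 < c2" "c1 + c2 \<le> 1"
    and eq: "F (lincomb c1 K c2 L) = BM_bound c1 c2"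
  defines "\<tau> \<equiv> c2 / (c1 + c2)"
  shows "0 < \<tau>" "\<tau> < 1" "F (lincomb (1 - \<tau>) K \<tau> L) = C * power_mean \<alpha> \<tau> (F K) (F L)"
    and "strict_subhom \<A> F \<alpha> \<Longrightarrow> c1 + c2 = 1"
proof -
  note conv = lincomb_as_dil_convex_lincomb[OF assms(1,2), folded \<tau>_def]
  show "0 < \<tau>" "\<tau> < 1" using conv(1,2) by simp_all
  have s: "0 < (c1 + c2) powr (1/\<alpha>)" using assms by simp
  have scaled: "(c1 + c2) powr (1/\<alpha>) * F (lincomb (1 - \<tau>) K \<tau> L) \<le> F (lincomb c1 K c2 L)"
    using subhom_dil_le[OF subhom, of "c1 + c2"] lincomb_in[of c1 c2] assms(1-3)
    unfolding conv(3) by simp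
  have "F (lincomb (1 - \<tau>) K \<tau> L) \<le> C * power_mean \<alpha> \<tau> (F K) (F L)"
    using scaled eq conv(4) s by simp
  then show "F (lincomb (1 - \<tau>) K \<tau> L) = C * power_mean \<alpha> \<tau> (F K) (F L)"
    using BM[OF conv(1,2)] by simp
  show "c1 + c2 = 1" if "strict_subhom \<A> F \<alpha>"
  proof (rule ccontr)
    assume "c1 + c2 \<noteq> 1"
    moreover have "0 < c1 * F K powr \<alpha> + c2 * F L powr \<alpha>"
      using assms(1,2) FK_pos FL_pos by (simp add: add_pos_pos)
    then have "0 < F (lincomb c1 K c2 L)"
      using eq C_pos by simp
    ultimately have "(c1 + c2) powr (1/\<alpha>) * F (lincomb (1 - \<tau>) K \<tau> L) < F (lincomb c1 K c2 L)"
      using strict_subhom_dil_less[OF that, of "c1 + c2"] lincomb_in[of c1 c2] assms(1-3)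
      unfolding conv(3) by simp
    then show False
      using eq conv(4) BM[OF conv(1,2)] s by (simp add: mult_left_mono)
  qed
qed

abbreviation psum_combination :: "real \<Rightarrow> real \<Rightarrow> 'a set" where
  "psum_combination p t \<equiv> psum p (pscale p (1 - t) K) (pscale p t L)"

abbreviation psum_slice :: "real \<Rightarrow> real \<Rightarrow> real \<Rightarrow> 'a set" where
  "psum_slice p t \<mu> \<equiv> lincomb (psum_weight p (1 - t) (1 - \<mu>)) K (psum_weight p t \<mu>) L"

abbreviation psum_slice_bound :: "real \<Rightarrow> real \<Rightarrow> real \<Rightarrow> real" where
  "psum_slice_bound p t \<mu> \<equiv> BM_bound (psum_weight p (1 - t) (1 - \<mu>)) (psum_weight p t \<mu>)"

lemma psum_slice_in: "psum_slice p t \<mu> \<in> \<A>"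
  by (rule lincomb_in) (simp_all add: psum_weight_def)

lemma psum_slice_subset:
  assumes "1 < p" "0 \<le> \<mu>" "\<mu> \<le> 1"
  shows "psum_slice p t \<mu> \<subseteq> psum_combination p t"
  using assms by (auto simp: psum_pscale_eq_Union_lincomb)

lemma psum_slice_optimal:
  assumes p: "1 < p" and t: "0 < t" "t < 1"
  obtains m0 where "0 < m0" "m0 < 1"
    and "C * power_mean (p * \<alpha>) t (F K) (F L) = psum_slice_bound p t m0"
    and "C * power_mean (p * \<alpha>) t (F K) (F L) \<le> F (psum_slice p t m0)"
proof -
  obtain m0 where m0: "0 < m0" "m0 < 1"
    and hoelder: "psum_weight p (1 - t) (1 - m0) * F K powr \<alpha> + psum_weight p t m0 * F L powr \<alpha>
       = ((1 - t) * (F K powr \<alpha>) powr p + t * (F L powr \<alpha>) powr p) powr (1 / p)"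
    using psum_weights_hoelder_equality[OF p t, of "F K powr \<alpha>" "F L powr \<alpha>"] FK_pos FL_pos
    by auto
  have "power_mean (p * \<alpha>) t (F K) (F L)
      = (((1 - t) * (F K powr \<alpha>) powr p + t * (F L powr \<alpha>) powr p) powr (1 / p)) powr (1/\<alpha>)"
    using p t alpha_pos FK_pos FL_pos
    by (simp add: power_mean_def powr_powr mult.commute add_pos_pos)
  then have eq: "C * power_mean (p * \<alpha>) t (F K) (F L) = psum_slice_bound p t m0"
    by (simp add: hoelder)
  moreover have "C * power_mean (p * \<alpha>) t (F K) (F L) \<le> F (psum_slice p t m0)"
    unfolding eq by (rule lincomb_lower_bound[OF psum_weights_bounds[OF p t m0]])
  ultimately show ?thesis using that m0 by blast
qed

lemma psum_lower_bound:
  assumes p: "1 \<le> p" and t: "0 < t" "t < 1" and P_in: "psum_combination p t \<in> \<A>"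
  shows "C * power_mean (p * \<alpha>) t (F K) (F L) \<le> F (psum_combination p t)"
proof (cases "p = 1")
  case True
  have "psum_combination p t = lincomb (1 - t) K t L"
    using True t by (simp add: psum_pscale_1)
  then show ?thesis using BM[OF t] True by simp
next
  case False
  with p have "1 < p" by simp
  then obtain m0 where m0: "0 < m0" "m0 < 1"
    and le: "C * power_mean (p * \<alpha>) t (F K) (F L) \<le> F (psum_slice p t m0)"
    using psum_slice_optimal t by blast
  have "F (psum_slice p t m0) \<le> F (psum_combination p t)"
    using F_mono psum_slice_in P_in psum_slice_subset[OF \<open>1 < p\<close>] m0
    by (simp add: increasing_on_def)
  with le show ?thesis by linarith
qed

lemma psum_equality_slice:
  assumes p: "1 < p" and t: "0 < t" "t < 1" and P_in: "psum_combination p t \<in> \<A>"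
    and eq: "F (psum_combination p t) = C * power_mean (p * \<alpha>) t (F K) (F L)"
  obtains m0 where "0 < m0" "m0 < 1"
    and "F (psum_slice p t m0) = psum_slice_bound p t m0"
    and "strictly_increasing_on \<A> F \<Longrightarrow> psum_combination p t = psum_slice p t m0"
proof -
  obtain m0 where m0: "0 < m0" "m0 < 1"
    and opt: "C * power_mean (p * \<alpha>) t (F K) (F L) = psum_slice_bound p t m0"
    and le: "C * power_mean (p * \<alpha>) t (F K) (F L) \<le> F (psum_slice p t m0)"
    using psum_slice_optimal[OF p t] by blast
  have sub: "psum_slice p t m0 \<subseteq> psum_combination p t"
    using psum_slice_subset[OF p] m0 by simp
  then have "F (psum_slice p t m0) \<le> F (psum_combination p t)"
    using F_mono psum_slice_in P_in by (simp add: increasing_on_def)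
  then have slice_eq: "F (psum_slice p t m0) = F (psum_combination p t)"
    using eq le by simp
  have "psum_combination p t = psum_slice p t m0" if "strictly_increasing_on \<A> F"
  proof (rule ccontr)
    assume "psum_combination p t \<noteq> psum_slice p t m0"
    with sub have "psum_slice p t m0 \<subset> psum_combination p t" by blast
    then show False
      using that psum_slice_in P_in slice_eq unfolding strictly_increasing_on_def by force
  qed
  moreover have "F (psum_slice p t m0) = psum_slice_bound p t m0"
    using slice_eq eq opt by linarith
  ultimately show ?thesis
    using that m0 by blast
qed

lemma psum_equality_imp_BM_equality:
  assumes "1 < p" "0 < t" "t < 1" "psum_combination p t \<in> \<A>"
    and "F (psum_combination p t) = C * power_mean (p * \<alpha>) t (F K) (F L)"
  shows "\<exists>\<tau>. 0 < \<tau> \<and> \<tau> < 1 \<and> F (lincomb (1 - \<tau>) K \<tau> L) = C * power_mean \<alpha> \<tau> (F K) (F L)"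
proof -
  obtain m0 where m0: "0 < m0" "m0 < 1"
    and slice_eq: "F (psum_slice p t m0) = psum_slice_bound p t m0"
    using psum_equality_slice[OF assms] by blast
  show ?thesis
    using lincomb_lower_bound_equality(1-3)[OF psum_weights_bounds[OF assms(1-3) m0] slice_eq] by blast
qed

lemma psum_equality_convex_hulls:
  assumes p: "1 < p" and t: "0 < t" "t < 1" and P_in: "psum_combination p t \<in> \<A>"
    and eq: "F (psum_combination p t) = C * power_mean (p * \<alpha>) t (F K) (F L)"
    and strict_mono: "strictly_increasing_on \<A> F"
    and K: "compact K" "K \<noteq> {}" and L: "compact L" "L \<noteq> {}"
  obtains \<kappa> where "0 < \<kappa>" "0 \<in> convex hull K" "0 \<in> convex hull L"
    "convex hull L = dil \<kappa> (convex hull K)" "strict_subhom \<A> F \<alpha> \<Longrightarrow> \<kappa> = 1"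
proof -
  obtain m0 where m0: "0 < m0" "m0 < 1"
    and slice_eq: "F (psum_slice p t m0) = psum_slice_bound p t m0"
    and P_eq: "psum_combination p t = psum_slice p t m0"
    using psum_equality_slice[OF p t P_in eq] strict_mono by blast
  define e where "e = 1 / hconj p"
  define a where "a = (1 - t) powr (1 / p)"
  define b where "b = t powr (1 / p)"
  have e: "0 < e" "e < 1" using p by (simp_all add: e_def inverse_hconj)
  have ab: "0 < a" "0 < b" using t by (simp_all add: a_def b_def)
  have weights: "psum_weight p (1 - t) (1 - \<mu>) = (1 - \<mu>) powr e * a" "psum_weight p t \<mu> = \<mu> powr e * b" for \<mu>
    by (simp_all add: psum_weight_def e_def a_def b_def)
  have slices: "lincomb ((1 - \<mu>) powr e * a) K (\<mu> powr e * b) L \<subseteq> lincomb ((1 - m0) powr e * a) K (m0 powr e * b) L"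
    if "0 \<le> \<mu>" "\<mu> \<le> 1" for \<mu>
    using psum_slice_subset[OF p that, of t] P_eq by (simp add: weights)
  define \<kappa> where "\<kappa> = (1 - m0) powr (e - 1) * a / (m0 powr (e - 1) * b)"
  have "0 < \<kappa>" using m0 ab by (simp add: \<kappa>_def)
  moreover note hulls = convex_hull_eq_dil_if_support_proportional[OF K(1) L(1) \<open>0 < \<kappa>\<close>
      support_proportional_if_lincomb_family_subset[OF K L e m0 ab slices, folded \<kappa>_def]]
  moreover have "\<kappa> = 1" if "strict_subhom \<A> F \<alpha>"
  proof -
    from lincomb_lower_bound_equality(4)[OF psum_weights_bounds[OF p t m0] slice_eq that]
    have "(1 - m0) powr e * a + m0 powr e * b = 1" by (simp add: weights)
    then have "(1 - \<mu>) powr e * a + \<mu> powr e * b \<le> (1 - m0) powr e * a + m0 powr e * b"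
      if "0 \<le> \<mu>" "\<mu> \<le> 1" for \<mu>
      using psum_weights_le_1[OF p that, of t] t by (simp add: weights)
    then have "(1 - m0) powr (e - 1) * a = m0 powr (e - 1) * b"
      by (intro powr_combination_interior_max(1)[OF e m0])
    then show ?thesis using m0 ab by (simp add: \<kappa>_def)
  qed
  ultimately show ?thesis using that by blast
qed

end

theorem mainTheorem3:
  fixes \<A> :: "'a::euclidean_space set set"
    and F :: "'a set \<Rightarrow> real"
    and \<alpha> C :: real
    and K L :: "'a set"
  assumes nonempty: "\<forall>A\<in>\<A>. A \<noteq> {}"
    and closed: "closed_lincomb \<A>"
    and Fnonneg: "\<forall>A\<in>\<A>. F A \<ge> 0"
    and Finc: "increasing_on \<A> F"
    and alpha_pos: "\<alpha> > 0"
    and Fsub: "subhom \<A> F \<alpha>"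
    and KA: "K \<in> \<A>" and LA: "L \<in> \<A>"
    and FKL: "F K * F L > 0"
    and C_pos: "C > 0"
    and BM: "\<forall>t. 0 < t \<and> t < 1 \<longrightarrow>
       F (lincomb (1 - t) K t L)
         \<ge> C * ((1 - t) * F K powr \<alpha> + t * F L powr \<alpha>) powr (1 / \<alpha>)"
  shows "(\<forall>p t. p \<ge> 1 \<and> 0 < t \<and> t < 1
            \<and> psum p (pscale p (1 - t) K) (pscale p t L) \<in> \<A> \<longrightarrow>
            F (psum p (pscale p (1 - t) K) (pscale p t L))
              \<ge> C * ((1 - t) * F K powr (p * \<alpha>) + t * F L powr (p * \<alpha>)) powr (1 / (p * \<alpha>)))
       \<and> (\<forall>p t. p > 1 \<and> 0 < t \<and> t < 1
            \<and> psum p (pscale p (1 - t) K) (pscale p t L) \<in> \<A>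
            \<and> F (psum p (pscale p (1 - t) K) (pscale p t L))
              = C * ((1 - t) * F K powr (p * \<alpha>) + t * F L powr (p * \<alpha>)) powr (1 / (p * \<alpha>))
          \<longrightarrow>
            (\<exists>\<mu>. 0 < \<mu> \<and> \<mu> < 1 \<and>
               F (lincomb (1 - \<mu>) K \<mu> L)
                 = C * ((1 - \<mu>) * F K powr \<alpha> + \<mu> * F L powr \<alpha>) powr (1 / \<alpha>))
          \<and> (strictly_increasing_on \<A> F \<and> compact K \<and> compact L \<longrightarrow>
               0 \<in> convex hull K \<and> 0 \<in> convex hull L
             \<and> (\<exists>r\<ge>0. convex hull K = dil r (convex hull L)
                      \<or> convex hull L = dil r (convex hull K))
             \<and> (strict_subhom \<A> F \<alpha> \<longrightarrow> convex hull K = convex hull L)))"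
proof -
  have "0 < F K" "0 < F L"
    using FKL Fnonneg KA LA by (auto simp: zero_less_mult_iff)
  then interpret brunn_minkowski_pair \<A> F \<alpha> C K L
    using assms by unfold_locales (auto simp: power_mean_def)
  have "K \<noteq> {}" "L \<noteq> {}" using nonempty KA LA by auto
  have hulls: "0 \<in> convex hull K \<and> 0 \<in> convex hull L
      \<and> (\<exists>r\<ge>0. convex hull K = dil r (convex hull L) \<or> convex hull L = dil r (convex hull K))
      \<and> (strict_subhom \<A> F \<alpha> \<longrightarrow> convex hull K = convex hull L)"
    if equality: "1 < p" "0 < t" "t < 1" "psum_combination p t \<in> \<A>"
      "F (psum_combination p t) = C * power_mean (p * \<alpha>) t (F K) (F L)"
      and strict: "strictly_increasing_on \<A> F" "compact K" "compact L" for p t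
  proof -
    obtain \<kappa> where "0 < \<kappa>" "0 \<in> convex hull K" "0 \<in> convex hull L"
      "convex hull L = dil \<kappa> (convex hull K)" "strict_subhom \<A> F \<alpha> \<Longrightarrow> \<kappa> = 1"
      using psum_equality_convex_hulls[OF equality strict(1,2) \<open>K \<noteq> {}\<close> strict(3) \<open>L \<noteq> {}\<close>] by blast
    then show ?thesis by (auto simp: dil_def intro!: exI[of _ \<kappa>])
  qed
  show ?thesis
    unfolding power_mean_def[symmetric]
    using psum_lower_bound psum_equality_imp_BM_equality hulls by blast
qed

end
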